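(* Consider the energy-efficiency maximization problem (P1) described in the context. The maximum of the system energy efficiency $\eta_{EE}$ over the feasible set of (P1) can always be obtained when each wireless device performs local computation during the whole time block, i.e., with execution times $\tau_k^* = T$ for all $k\in\{1,\dots,K\}$.
   Context: System: one power beacon (PB) with transmit power $P_0\ge 0$, one MEC server, a reconfigurable intelligent surface (RIS) with $N$ elements, and $K$ wireless devices (WDs), all nodes single-antenna. Given channels $g_{\mathrm{PU},k}\in\mathbb{C}$, $\mathbf{g}_{\mathrm{PI}},\mathbf{g}_{\mathrm{IU},k}\in\mathbb{C}^{N}$, $h_{\mathrm{UM},k}\in\mathbb{C}$, $\mathbf{h}_{\mathrm{UI},k},\mathbf{h}_{\mathrm{IM}}\in\mathbb{C}^{N}$. For phases $\boldsymbol\theta=(\theta_1,\dots,\theta_N)$ let $\boldsymbol\Theta=\mathrm{diag}(e^{j\theta_1},\dots,e^{j\theta_N})$ and $g_k=g_{\mathrm{PU},k}+\mathbf{g}_{\mathrm{PI}}^H\boldsymbol\Theta\mathbf{g}_{\mathrm{IU},k}$, $h_k=h_{\mathrm{UM},k}+\mathbf{h}_{\mathrm{UI},k}^H\boldsymbol\Theta\mathbf{h}_{\mathrm{IM}}$. Optimization variables: backscatter times $t^b_k\ge0$, active-transmission times $t^o_k\ge0$, backscattering coefficients $\rho_k\in[0,1]$, PB power $P_0\le P_{\max}$, WD transmit powers $p_k\ge0$, execution times $0\le\tau_k\le T$, CPU frequencies $0\le f_k\le f_{\max}$, and phases $\theta_n$ (unit-modulus reflection). Positive constants: $T,\sigma^2,\zeta,C_{\mathrm{cpu}},\epsilon_k,\delta,P_{c,k},p_{c,k},a_k,b_k,c_k$,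 $Q_k\ge0$, $\gamma_{\min,k}$. Throughputs: $\Gamma^b_k=t^b_k\log_2\!\big(1+\zeta\rho_kP_0|h_k|^2|g_k|^2/\sigma^2\big)$, $\Gamma^o_k=t^o_k\log_2\!\big(1+p_k|h_k|^2/\sigma^2\big)$, $\Gamma_k=\tau_kf_k/C_{\mathrm{cpu}}$, $R_{\mathrm{sum}}=\sum_{k=1}^K(\Gamma^b_k+\Gamma^o_k+\Gamma_k)$. Energies: $E_{1,k}=P_{c,k}t^b_k$, $E_{2,k}=\frac{p_k}{\delta}t^o_k+p_{c,k}t^o_k+\epsilon_kf_k^3\tau_k$, $E_{\mathrm{total}}=\sum_k(E_{1,k}+E_{2,k})$. Harvested energy: $E^b_k=\Big(\frac{a_k(1-\rho_k)P_0|g_k|^2+b_k}{(1-\rho_k)P_0|g_k|^2+c_k}-\frac{b_k}{c_k}\Big)t^b_k$, $P^b_k=\frac{a_kP_0|g_k|^2+b_k}{P_0|g_k|^2+c_k}-\frac{b_k}{c_k}$, $E^t_k=E^b_k+\sum_{i\ne k}P^b_kt^b_i$. Problem (P1): maximize $\eta_{EE}=R_{\mathrm{sum}}/E_{\mathrm{total}}$ over all the variables subject to: $\Gamma^b_k+\Gamma^o_k+\Gamma_k\ge\gamma_{\min,k}$ for all $k$; $E_{1,k}+E_{2,k}\le E^t_k+Q_k$ for all $k$; $\sum_{k=1}^K(t^b_k+t^o_k)\le T$ and $0\le\tau_k\le T$; $0\le f_k\le f_{\max}$; $0\le\rho_k\le1$; $P_0\le P_{\max}$; $|e^{j\theta_n}|=1$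 for all $n$; $p_k,t^b_k,t^o_k\ge0$. *)

theory Defs
  imports Complex_Main
begin

text \<open>Devices are indexed by
  k \<in> {1..K}, RIS elements by n \<in> {1..N}.  A vector in C^N is a function nat \<Rightarrow> complex
  whose entries at n \<in> {1..N} are used.\<close>

record sysparams =
  sp_K :: nat
  sp_N :: nat
  sp_T :: real
  sp_sigma2 :: real
  sp_zeta :: real
  sp_Ccpu :: real
  sp_eps :: "nat \<Rightarrow> real"
  sp_delta :: real
  sp_Pc :: "nat \<Rightarrow> real"
  sp_pc :: "nat \<Rightarrow> real"
  sp_a :: "nat \<Rightarrow> real"
  sp_b :: "nat \<Rightarrow> real"
  sp_c :: "nat \<Rightarrow> real"
  sp_Q :: "nat \<Rightarrow> real"
  sp_gmin :: "nat \<Rightarrow> real"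
  sp_Pmax :: real
  sp_fmax :: real
  sp_gPU :: "nat \<Rightarrow> complex"
  sp_gPI :: "nat \<Rightarrow> complex"
  sp_gIU :: "nat \<Rightarrow> nat \<Rightarrow> complex"
  sp_hUM :: "nat \<Rightarrow> complex"
  sp_hUI :: "nat \<Rightarrow> nat \<Rightarrow> complex"
  sp_hIM :: "nat \<Rightarrow> complex"

definition valid_params :: "sysparams \<Rightarrow> bool" where
  "valid_params S \<longleftrightarrow>
     sp_T S > 0 \<and> sp_sigma2 S > 0 \<and> sp_zeta S > 0 \<and> sp_Ccpu S > 0 \<and> sp_delta S > 0 \<and>
     (\<forall>k\<in>{1..sp_K S}. sp_eps S k > 0 \<and> sp_Pc S k > 0 \<and> sp_pc S k > 0 \<and>
        sp_a S k > 0 \<and> sp_b S k > 0 \<and> sp_c S k > 0 \<and> sp_Q S k \<ge> 0 \<and> sp_gmin S k > 0)"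

text \<open>Optimization variables. The reflection coefficient of element n is cis (theta n),
  so the unit-modulus constraint is built in.\<close>

record decvars =
  v_tb :: "nat \<Rightarrow> real"
  v_to :: "nat \<Rightarrow> real"
  v_rho :: "nat \<Rightarrow> real"
  v_P0 :: real
  v_p :: "nat \<Rightarrow> real"
  v_tau :: "nat \<Rightarrow> real"
  v_f :: "nat \<Rightarrow> real"
  v_theta :: "nat \<Rightarrow> real"

definition chan_g :: "sysparams \<Rightarrow> decvars \<Rightarrow> nat \<Rightarrow> complex" where
  "chan_g S v k = sp_gPU S k +
     (\<Sum>n\<in>{1..sp_N S}. cnj (sp_gPI S n) * cis (v_theta v n) * sp_gIU S k n)"

definition chan_h :: "sysparams \<Rightarrow> decvars \<Rightarrow> nat \<Rightarrow> complex" where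
  "chan_h S v k = sp_hUM S k +
     (\<Sum>n\<in>{1..sp_N S}. cnj (sp_hUI S k n) * cis (v_theta v n) * sp_hIM S n)"

definition Gamma_b :: "sysparams \<Rightarrow> decvars \<Rightarrow> nat \<Rightarrow> real" where
  "Gamma_b S v k = v_tb v k * log 2 (1 + sp_zeta S * v_rho v k * v_P0 v
       * (cmod (chan_h S v k))^2 * (cmod (chan_g S v k))^2 / sp_sigma2 S)"

definition Gamma_o :: "sysparams \<Rightarrow> decvars \<Rightarrow> nat \<Rightarrow> real" where
  "Gamma_o S v k = v_to v k * log 2 (1 + v_p v k * (cmod (chan_h S v k))^2 / sp_sigma2 S)"

definition Gamma_loc :: "sysparams \<Rightarrow> decvars \<Rightarrow> nat \<Rightarrow> real" where
  "Gamma_loc S v k = v_tau v k * v_f v k / sp_Ccpu S"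

definition R_sum :: "sysparams \<Rightarrow> decvars \<Rightarrow> real" where
  "R_sum S v = (\<Sum>k\<in>{1..sp_K S}. Gamma_b S v k + Gamma_o S v k + Gamma_loc S v k)"

definition E1 :: "sysparams \<Rightarrow> decvars \<Rightarrow> nat \<Rightarrow> real" where
  "E1 S v k = sp_Pc S k * v_tb v k"

definition E2 :: "sysparams \<Rightarrow> decvars \<Rightarrow> nat \<Rightarrow> real" where
  "E2 S v k = v_p v k / sp_delta S * v_to v k + sp_pc S k * v_to v k
              + sp_eps S k * (v_f v k)^3 * v_tau v k"

definition E_total :: "sysparams \<Rightarrow> decvars \<Rightarrow> real" where
  "E_total S v = (\<Sum>k\<in>{1..sp_K S}. E1 S v k + E2 S v k)"

definition E_b :: "sysparams \<Rightarrow> decvars \<Rightarrow> nat \<Rightarrow> real" where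
  "E_b S v k =
     ((sp_a S k * (1 - v_rho v k) * v_P0 v * (cmod (chan_g S v k))^2 + sp_b S k)
        / ((1 - v_rho v k) * v_P0 v * (cmod (chan_g S v k))^2 + sp_c S k)
      - sp_b S k / sp_c S k) * v_tb v k"

definition P_b :: "sysparams \<Rightarrow> decvars \<Rightarrow> nat \<Rightarrow> real" where
  "P_b S v k =
     (sp_a S k * v_P0 v * (cmod (chan_g S v k))^2 + sp_b S k)
        / (v_P0 v * (cmod (chan_g S v k))^2 + sp_c S k)
      - sp_b S k / sp_c S k"

definition E_t :: "sysparams \<Rightarrow> decvars \<Rightarrow> nat \<Rightarrow> real" where
  "E_t S v k = E_b S v k + (\<Sum>i\<in>{1..sp_K S} - {k}. P_b S v k * v_tb v i)"

definition eta_EE :: "sysparams \<Rightarrow> decvars \<Rightarrow> real" where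
  "eta_EE S v = R_sum S v / E_total S v"

definition feasible :: "sysparams \<Rightarrow> decvars \<Rightarrow> bool" where
  "feasible S v \<longleftrightarrow>
     (\<forall>k\<in>{1..sp_K S}.
        Gamma_b S v k + Gamma_o S v k + Gamma_loc S v k \<ge> sp_gmin S k \<and>
        E1 S v k + E2 S v k \<le> E_t S v k + sp_Q S k \<and>
        0 \<le> v_tau v k \<and> v_tau v k \<le> sp_T S \<and>
        0 \<le> v_f v k \<and> v_f v k \<le> sp_fmax S \<and>
        0 \<le> v_rho v k \<and> v_rho v k \<le> 1 \<and>
        0 \<le> v_p v k \<and> 0 \<le> v_tb v k \<and> 0 \<le> v_to v k) \<and>
     (\<Sum>k\<in>{1..sp_K S}. v_tb v k + v_to v k) \<le> sp_T S \<and>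
     0 \<le> v_P0 v \<and> v_P0 v \<le> sp_Pmax S"

definition optimal :: "sysparams \<Rightarrow> decvars \<Rightarrow> bool" where
  "optimal S v \<longleftrightarrow> feasible S v \<and> (\<forall>w. feasible S w \<longrightarrow> eta_EE S w \<le> eta_EE S v)"

end

theory Submission
  imports Defs
begin

(* Replace the local computation schedule (tau_k, f_k) of every device by (T, f_k tau_k / T).
   The number of computed bits tau_k f_k / C is unchanged, no other variable moves, and the
   computation energy eps_k f_k^3 tau_k is multiplied by (tau_k / T)^2 <= 1.  Hence every
   constraint stays satisfied, the sum rate is unchanged and the total energy does not increase,
   so the energy efficiency does not decrease.  The total energy of a feasible point is positive
   because every device must deliver a positive number of bits. *)

definition stretch_computation :: "sysparams \<Rightarrow> decvars \<Rightarrow> decvars" where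
  "stretch_computation S v =
     v\<lparr>v_tau := (\<lambda>k. sp_T S), v_f := (\<lambda>k. v_f v k * v_tau v k / sp_T S)\<rparr>"

lemma stretched_cubic_energy_le:
  fixes e f t T :: real
  assumes "0 < T" "0 \<le> t" "t \<le> T" "0 \<le> f" "0 \<le> e"
  shows "e * (f * t / T) ^ 3 * T \<le> e * f ^ 3 * t"
proof -
  have "(f * t / T) ^ 3 * T = f ^ 3 * t * (t / T) ^ 2"
    using assms(1) by (simp add: field_simps power2_eq_square power3_eq_cube)
  also have "\<dots> \<le> f ^ 3 * t"
    using assms by (simp add: mult_left_le power_le_one)
  finally show ?thesis
    using assms(5) by (simp add: mult.assoc mult_left_mono)
qed

lemma valid_params_T_pos: "valid_params S \<Longrightarrow> 0 < sp_T S"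
  by (simp add: valid_params_def)

lemma valid_paramsD:
  assumes "valid_params S" "k \<in> {1..sp_K S}"
  shows "0 < sp_delta S" "0 < sp_eps S k" "0 < sp_Pc S k" "0 < sp_pc S k"
    "0 < sp_gmin S k"
  using assms by (simp_all add: valid_params_def)

lemma feasible_deviceD:
  assumes "feasible S v" "k \<in> {1..sp_K S}"
  shows "sp_gmin S k \<le> Gamma_b S v k + Gamma_o S v k + Gamma_loc S v k"
    "E1 S v k + E2 S v k \<le> E_t S v k + sp_Q S k"
    "0 \<le> v_tau v k" "v_tau v k \<le> sp_T S" "0 \<le> v_f v k" "v_f v k \<le> sp_fmax S"
    "0 \<le> v_rho v k" "v_rho v k \<le> 1" "0 \<le> v_p v k" "0 \<le> v_tb v k" "0 \<le> v_to v k"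
  using assms unfolding feasible_def by blast+

lemma device_energy_pos:
  assumes S: "valid_params S" and v: "feasible S v" and k: "k \<in> {1..sp_K S}"
  shows "0 < E1 S v k + E2 S v k"
proof (rule ccontr)
  note par = valid_paramsD[OF S k] and fk = feasible_deviceD[OF v k]
  assume "\<not> 0 < E1 S v k + E2 S v k"
  moreover have "0 \<le> v_p v k / sp_delta S * v_to v k"
    using par fk by simp
  ultimately have "sp_Pc S k * v_tb v k = 0" "sp_pc S k * v_to v k = 0"
    "sp_eps S k * v_f v k ^ 3 * v_tau v k = 0"
    using par fk unfolding E1_def E2_def
    by (smt (verit) mult_nonneg_nonneg zero_le_power)+
  then have "v_tb v k = 0" "v_to v k = 0" "v_tau v k * v_f v k = 0"
    using par by auto
  then have "Gamma_b S v k + Gamma_o S v k + Gamma_loc S v k = 0"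
    by (simp add: Gamma_b_def Gamma_o_def Gamma_loc_def)
  then show False
    using fk(1) par(5) by simp
qed

lemma R_sum_nonneg:
  assumes "valid_params S" "feasible S v"
  shows "0 \<le> R_sum S v"
  unfolding R_sum_def
  using feasible_deviceD(1)[OF assms(2)] valid_paramsD(5)[OF assms(1)]
  by (smt (verit) sum_nonneg)

lemma E_total_pos:
  assumes "valid_params S" "feasible S v" "0 < sp_K S"
  shows "0 < E_total S v"
  unfolding E_total_def
  using assms device_energy_pos by (intro sum_pos) auto

lemma
  shows chan_g_stretch_computation: "chan_g S (stretch_computation S v) = chan_g S v"
    and chan_h_stretch_computation: "chan_h S (stretch_computation S v) = chan_h S v"
  by (auto simp: chan_g_def chan_h_def stretch_computation_def)

lemma
  assumes "0 < sp_T S"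
  shows Gamma_b_stretch_computation: "Gamma_b S (stretch_computation S v) k = Gamma_b S v k"
    and Gamma_o_stretch_computation: "Gamma_o S (stretch_computation S v) k = Gamma_o S v k"
    and Gamma_loc_stretch_computation:
      "Gamma_loc S (stretch_computation S v) k = Gamma_loc S v k"
    and E1_stretch_computation: "E1 S (stretch_computation S v) k = E1 S v k"
    and E_t_stretch_computation: "E_t S (stretch_computation S v) k = E_t S v k"
  using assms
  by (simp_all add: Gamma_b_def Gamma_o_def Gamma_loc_def E1_def E_t_def E_b_def P_b_def
      chan_g_stretch_computation chan_h_stretch_computation)
    (simp_all add: stretch_computation_def)

lemma R_sum_stretch_computation:
  assumes "0 < sp_T S"
  shows "R_sum S (stretch_computation S v) = R_sum S v"
  using assms
  by (simp add: R_sum_def Gamma_b_stretch_computation Gamma_o_stretch_computation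
      Gamma_loc_stretch_computation)

lemma E2_stretch_computation_le:
  assumes "valid_params S" "feasible S v" "k \<in> {1..sp_K S}"
  shows "E2 S (stretch_computation S v) k \<le> E2 S v k"
proof -
  note par = valid_params_T_pos[OF assms(1)] valid_paramsD[OF assms(1,3)]
    and fk = feasible_deviceD[OF assms(2,3)]
  have "sp_eps S k * (v_f v k * v_tau v k / sp_T S) ^ 3 * sp_T S
      \<le> sp_eps S k * v_f v k ^ 3 * v_tau v k"
    using par fk by (intro stretched_cubic_energy_le) auto
  then show ?thesis
    by (simp add: E2_def stretch_computation_def)
qed

lemma E_total_stretch_computation_le:
  assumes "valid_params S" "feasible S v"
  shows "E_total S (stretch_computation S v) \<le> E_total S v"
  unfolding E_total_def
  using assms valid_params_T_pos
  by (intro sum_mono add_mono)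
    (auto simp: E1_stretch_computation E2_stretch_computation_le)

lemma feasible_stretch_computation:
  assumes S: "valid_params S" and v: "feasible S v"
  shows "feasible S (stretch_computation S v)"
  unfolding feasible_def
proof (intro conjI ballI)
  let ?w = "stretch_computation S v"
  fix k assume k: "k \<in> {1..sp_K S}"
  note par = valid_params_T_pos[OF S] valid_paramsD[OF S k] and fk = feasible_deviceD[OF v k]
  have f_le: "v_f v k * v_tau v k / sp_T S \<le> v_f v k"
    using par fk by (simp add: divide_le_eq mult_left_mono)
  show "sp_gmin S k \<le> Gamma_b S ?w k + Gamma_o S ?w k + Gamma_loc S ?w k"
    using fk par by (simp add: Gamma_b_stretch_computation Gamma_o_stretch_computation
        Gamma_loc_stretch_computation)
  show "E1 S ?w k + E2 S ?w k \<le> E_t S ?w k + sp_Q S k"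
    using fk(2) E2_stretch_computation_le[OF S v k] par
    by (simp add: E1_stretch_computation E_t_stretch_computation)
  show "0 \<le> v_f ?w k" "v_f ?w k \<le> sp_fmax S"
    using fk par f_le by (simp_all add: stretch_computation_def)
  show "0 \<le> v_tau ?w k" "v_tau ?w k \<le> sp_T S"
    "0 \<le> v_rho ?w k" "v_rho ?w k \<le> 1" "0 \<le> v_p ?w k" "0 \<le> v_tb ?w k" "0 \<le> v_to ?w k"
    using fk par by (simp_all add: stretch_computation_def)
next
  show "(\<Sum>k\<in>{1..sp_K S}. v_tb (stretch_computation S v) k + v_to (stretch_computation S v) k)
      \<le> sp_T S"
    "0 \<le> v_P0 (stretch_computation S v)" "v_P0 (stretch_computation S v) \<le> sp_Pmax S"
    using v by (simp_all add: feasible_def stretch_computation_def)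
qed

lemma eta_EE_stretch_computation_ge:
  assumes S: "valid_params S" and v: "feasible S v"
  shows "eta_EE S v \<le> eta_EE S (stretch_computation S v)"
proof (cases "sp_K S = 0")
  case True
  then show ?thesis by (simp add: eta_EE_def R_sum_def)
next
  case False
  let ?w = "stretch_computation S v"
  have "0 < E_total S ?w"
    using E_total_pos[OF S feasible_stretch_computation[OF S v]] False by simp
  with E_total_stretch_computation_le[OF S v]
  have "R_sum S v / E_total S v \<le> R_sum S v / E_total S ?w"
    by (intro divide_left_mono R_sum_nonneg[OF S v]) auto
  then show ?thesis
    using valid_params_T_pos[OF S] False
    by (simp add: eta_EE_def R_sum_stretch_computation)
qed

lemma optimal_stretch_computation:
  assumes "valid_params S" "optimal S v"
  shows "optimal S (stretch_computation S v)"
  using assms feasible_stretch_computation eta_EE_stretch_computation_ge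
  unfolding optimal_def by (meson order_trans)

lemma v_tau_stretch_computation: "v_tau (stretch_computation S v) k = sp_T S"
  by (simp add: stretch_computation_def)

theorem proposition1:
  assumes "valid_params S"
  shows "(\<forall>v. feasible S v \<longrightarrow>
            (\<exists>w. feasible S w \<and> (\<forall>k\<in>{1..sp_K S}. v_tau w k = sp_T S) \<and>
                 eta_EE S v \<le> eta_EE S w)) \<and>
         ((\<exists>v. optimal S v) \<longrightarrow>
            (\<exists>w. optimal S w \<and> (\<forall>k\<in>{1..sp_K S}. v_tau w k = sp_T S)))"
  using assms feasible_stretch_computation eta_EE_stretch_computation_ge
    optimal_stretch_computation v_tau_stretch_computation
  by blast

end
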